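(* In the setting of the context, suppose in addition that $\mathcal B_1,\mathcal B_2\subset\mathcal B$ are subalgebras such that multiplication $\mathcal B_1\otimes\mathcal B_2\to\mathcal B$ is a linear isomorphism, $\Delta(\mathcal B_1)\subset\mathcal B_1\otimes\mathcal B$, $\Delta(\mathcal B_2)\subset\mathcal B\otimes\mathcal B_2$, and define $\Pi'_1(b_1b_2)=b_1\varepsilon(b_2)$, $\Pi'_2(b_1b_2)=\varepsilon(b_1)b_2$ ($b_i\in\mathcal B_i$). If $\mathcal A_i$ and $\mathcal B_j$ are mutually orthogonal for $i\neq j$, i.e. $\langle a_i,b_j\rangle=\varepsilon(a_i)\varepsilon(b_j)$ for all $a_i\in\mathcal A_i$, $b_j\in\mathcal B_j$, $i\neq j$, then $$(\Pi_i\otimes\mathrm{id})\mathcal R=(\mathrm{id}\otimes\Pi'_i)\mathcal R=(\Pi_i\otimes\Pi'_i)\mathcal R,\qquad i=1,2,$$ so the factorizations $\mathcal R=\mathcal R_1\mathcal R_2$ induced by the decompositions of $\mathcal A$ and of $\mathcal B$ coincide.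
   Context: $\mathcal A$ and $\mathcal B$ are bialgebras (comultiplication $\Delta$, counit $\varepsilon$) with a nondegenerate pairing $\langle\cdot,\cdot\rangle:\mathcal A\otimes\mathcal B\to\mathbb C$ satisfying $\langle a,b_1b_2\rangle=\langle\Delta(a),b_1\otimes b_2\rangle$, $\langle a_1a_2,b\rangle=\langle a_2\otimes a_1,\Delta(b)\rangle$ (graded with finite-dimensional components, tensors in the completed tensor product). $\mathcal R=\sum_\alpha a^\alpha\otimes b_\alpha$ is the canonical tensor ($\sum_\alpha\langle a^\alpha,b\rangle b_\alpha=b$, $\sum_\alpha a^\alpha\langle a,b_\alpha\rangle=a$). $\mathcal A_1,\mathcal A_2\subset\mathcal A$ are subalgebras with multiplication $\mathcal A_1\otimes\mathcal A_2\to\mathcal A$ a linear isomorphism, $\Delta(\mathcal A_1)\subset\mathcal A\otimes\mathcal A_1$, $\Delta(\mathcal A_2)\subset\mathcal A_2\otimes\mathcal A$, and $\Pi_1(a_1a_2)=a_1\varepsilon(a_2)$, $\Pi_2(a_1a_2)=\varepsilon(a_1)a_2$ for $a_i\in\mathcal A_i$. *)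

theory Defs
  imports Complex_Main
begin

text \<open>
  A complex vector space is a type of class ab_group_add together with a
  scalar multiplication sc satisfying the axioms of the locale vector_space.
  Elements of algebraic tensor products V (x) V, V (x) V (x) V are represented by finite
  lists of pairs/triples (formal finite sums of pure tensors); two such representatives are
  equal as tensors iff every bilinear (resp. trilinear) scalar form takes the same value on
  them (universal property of the tensor product over a field).
  Elements of the completed tensor product A (x)^ B (A,B graded with finite-dimensional
  components, graded nondegenerate pairing) are represented by the bilinear forms on B x A
  they induce: T corresponds to (b,a) |-> <T, b (x) a> where <x (x) y, b (x) a> = <x,b><a,y>.
\<close>

definition linmap :: "(complex \<Rightarrow> 'a::ab_group_add \<Rightarrow> 'a) \<Rightarrow> (complex \<Rightarrow> 'c::ab_group_add \<Rightarrow> 'c)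
    \<Rightarrow> ('a \<Rightarrow> 'c) \<Rightarrow> bool" where
  "linmap s1 s2 f \<longleftrightarrow> (\<forall>x y. f (x + y) = f x + f y) \<and> (\<forall>c x. f (s1 c x) = s2 c (f x))"

definition lin_functional :: "(complex \<Rightarrow> 'a::ab_group_add \<Rightarrow> 'a) \<Rightarrow> ('a \<Rightarrow> complex) \<Rightarrow> bool" where
  "lin_functional s f \<longleftrightarrow> (\<forall>x y. f (x + y) = f x + f y) \<and> (\<forall>c x. f (s c x) = c * f x)"

definition bilin :: "(complex \<Rightarrow> 'a::ab_group_add \<Rightarrow> 'a) \<Rightarrow> (complex \<Rightarrow> 'c::ab_group_add \<Rightarrow> 'c)
    \<Rightarrow> ('a \<Rightarrow> 'c \<Rightarrow> complex) \<Rightarrow> bool" where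
  "bilin s1 s2 \<phi> \<longleftrightarrow> (\<forall>y. lin_functional s1 (\<lambda>x. \<phi> x y)) \<and> (\<forall>x. lin_functional s2 (\<lambda>y. \<phi> x y))"

definition trilin :: "(complex \<Rightarrow> 'a::ab_group_add \<Rightarrow> 'a) \<Rightarrow> ('a \<Rightarrow> 'a \<Rightarrow> 'a \<Rightarrow> complex) \<Rightarrow> bool" where
  "trilin s \<psi> \<longleftrightarrow> (\<forall>y z. lin_functional s (\<lambda>x. \<psi> x y z)) \<and> (\<forall>x z. lin_functional s (\<lambda>y. \<psi> x y z))
       \<and> (\<forall>x y. lin_functional s (\<lambda>z. \<psi> x y z))"

definition teq2 :: "(complex \<Rightarrow> 'a::ab_group_add \<Rightarrow> 'a) \<Rightarrow> ('a \<times> 'a) list \<Rightarrow> ('a \<times> 'a) list \<Rightarrow> bool" where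
  "teq2 s xs ys \<longleftrightarrow> (\<forall>\<phi>. bilin s s \<phi> \<longrightarrow>
      sum_list (map (\<lambda>(u,v). \<phi> u v) xs) = sum_list (map (\<lambda>(u,v). \<phi> u v) ys))"

definition teq3 :: "(complex \<Rightarrow> 'a::ab_group_add \<Rightarrow> 'a) \<Rightarrow> ('a \<times> 'a \<times> 'a) list \<Rightarrow> ('a \<times> 'a \<times> 'a) list \<Rightarrow> bool" where
  "teq3 s xs ys \<longleftrightarrow> (\<forall>\<psi>. trilin s \<psi> \<longrightarrow>
      sum_list (map (\<lambda>(u,v,w). \<psi> u v w) xs) = sum_list (map (\<lambda>(u,v,w). \<psi> u v w) ys))"

definition bialgebra :: "(complex \<Rightarrow> 'a::ring_1 \<Rightarrow> 'a) \<Rightarrow> ('a \<Rightarrow> ('a \<times> 'a) list) \<Rightarrow> ('a \<Rightarrow> complex) \<Rightarrow> bool" where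
  "bialgebra s D e \<longleftrightarrow>
     vector_space s \<and>
     (\<forall>c x y. s c (x * y) = s c x * y \<and> s c (x * y) = x * s c y) \<and>
     (\<forall>x y. teq2 s (D (x + y)) (D x @ D y)) \<and>
     (\<forall>c x. teq2 s (D (s c x)) (map (\<lambda>(u,v). (s c u, v)) (D x))) \<and>
     (\<forall>x. teq3 s (concat (map (\<lambda>(u,v). map (\<lambda>(u1,u2). (u1,u2,v)) (D u)) (D x)))
                   (concat (map (\<lambda>(u,v). map (\<lambda>(v1,v2). (u,v1,v2)) (D v)) (D x)))) \<and>
     lin_functional s e \<and>
     (\<forall>x. sum_list (map (\<lambda>(u,v). s (e u) v) (D x)) = x \<and>
          sum_list (map (\<lambda>(u,v). s (e v) u) (D x)) = x) \<and>
     (\<forall>x y. teq2 s (D (x * y)) [(u * u', v * v'). (u,v) \<leftarrow> D x, (u',v') \<leftarrow> D y]) \<and>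
     teq2 s (D 1) [(1,1)] \<and>
     (\<forall>x y. e (x * y) = e x * e y) \<and> e 1 = 1"

definition graded_space :: "(complex \<Rightarrow> 'a::ring_1 \<Rightarrow> 'a) \<Rightarrow> (nat \<Rightarrow> 'a set) \<Rightarrow> bool" where
  "graded_space s gr \<longleftrightarrow>
     (\<forall>n. module.subspace s (gr n)) \<and>
     (\<forall>n. \<exists>S. finite S \<and> S \<subseteq> gr n \<and> module.span s S = gr n) \<and>
     (\<forall>a. \<exists>!c. (\<forall>n. c n \<in> gr n) \<and> finite {n. c n \<noteq> 0} \<and> a = (\<Sum>n\<in>{n. c n \<noteq> 0}. c n)) \<and>
     (\<forall>n m x y. x \<in> gr n \<longrightarrow> y \<in> gr m \<longrightarrow> x * y \<in> gr (n + m)) \<and> 1 \<in> gr 0"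

definition graded_bialgebra :: "(complex \<Rightarrow> 'a::ring_1 \<Rightarrow> 'a) \<Rightarrow> ('a \<Rightarrow> ('a \<times> 'a) list) \<Rightarrow> ('a \<Rightarrow> complex)
    \<Rightarrow> (nat \<Rightarrow> 'a set) \<Rightarrow> bool" where
  "graded_bialgebra s D e gr \<longleftrightarrow> bialgebra s D e \<and> graded_space s gr \<and>
     (\<forall>n x. x \<in> gr n \<longrightarrow> (\<exists>xs. teq2 s xs (D x) \<and>
                (\<forall>(u,v)\<in>set xs. \<exists>p q. p + q = n \<and> u \<in> gr p \<and> v \<in> gr q))) \<and>
     (\<forall>n x. x \<in> gr n \<longrightarrow> n > 0 \<longrightarrow> e x = 0)"

definition hopf_pairing ::
  "(complex \<Rightarrow> 'a::ring_1 \<Rightarrow> 'a) \<Rightarrow> ('a \<Rightarrow> ('a \<times> 'a) list) \<Rightarrow> (nat \<Rightarrow> 'a set) \<Rightarrow>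
   (complex \<Rightarrow> 'b::ring_1 \<Rightarrow> 'b) \<Rightarrow> ('b \<Rightarrow> ('b \<times> 'b) list) \<Rightarrow> (nat \<Rightarrow> 'b set) \<Rightarrow>
   ('a \<Rightarrow> 'b \<Rightarrow> complex) \<Rightarrow> bool" where
  "hopf_pairing sA DA grA sB DB grB P \<longleftrightarrow>
     bilin sA sB P \<and>
     (\<forall>a. (\<forall>b. P a b = 0) \<longrightarrow> a = 0) \<and> (\<forall>b. (\<forall>a. P a b = 0) \<longrightarrow> b = 0) \<and>
     (\<forall>n m a b. a \<in> grA n \<longrightarrow> b \<in> grB m \<longrightarrow> n \<noteq> m \<longrightarrow> P a b = 0) \<and>
     (\<forall>a b1 b2. P a (b1 * b2) = sum_list (map (\<lambda>(x,y). P x b1 * P y b2) (DA a))) \<and>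
     (\<forall>a1 a2 b. P (a1 * a2) b = sum_list (map (\<lambda>(u,v). P a2 u * P a1 v) (DB b)))"

definition subalgebra :: "(complex \<Rightarrow> 'a::ring_1 \<Rightarrow> 'a) \<Rightarrow> 'a set \<Rightarrow> bool" where
  "subalgebra s S \<longleftrightarrow> module.subspace s S \<and> 1 \<in> S \<and> (\<forall>x\<in>S. \<forall>y\<in>S. x * y \<in> S)"

definition graded_subspace :: "(nat \<Rightarrow> 'a::ring_1 set) \<Rightarrow> 'a set \<Rightarrow> bool" where
  "graded_subspace gr S \<longleftrightarrow> (\<forall>a\<in>S. \<forall>c. (\<forall>n. c n \<in> gr n) \<and> finite {n. c n \<noteq> 0} \<and>
       a = (\<Sum>n\<in>{n. c n \<noteq> 0}. c n) \<longrightarrow> (\<forall>n. c n \<in> S))"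

definition mult_iso :: "(complex \<Rightarrow> 'a::ring_1 \<Rightarrow> 'a) \<Rightarrow> 'a set \<Rightarrow> 'a set \<Rightarrow> bool" where
  "mult_iso s S1 S2 \<longleftrightarrow>
     (\<forall>a. \<exists>xs. set xs \<subseteq> S1 \<times> S2 \<and> a = sum_list (map (\<lambda>(x,y). x * y) xs)) \<and>
     (\<forall>xs. set xs \<subseteq> S1 \<times> S2 \<longrightarrow> sum_list (map (\<lambda>(x,y). x * y) xs) = 0 \<longrightarrow> teq2 s xs [])"

definition proj1 :: "(complex \<Rightarrow> 'a::ring_1 \<Rightarrow> 'a) \<Rightarrow> ('a \<Rightarrow> complex) \<Rightarrow> 'a set \<Rightarrow> 'a set \<Rightarrow> 'a \<Rightarrow> 'a" where
  "proj1 s e S1 S2 = (THE f. linmap s s f \<and> (\<forall>x\<in>S1. \<forall>y\<in>S2. f (x * y) = s (e y) x))"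

definition proj2 :: "(complex \<Rightarrow> 'a::ring_1 \<Rightarrow> 'a) \<Rightarrow> ('a \<Rightarrow> complex) \<Rightarrow> 'a set \<Rightarrow> 'a set \<Rightarrow> 'a \<Rightarrow> 'a" where
  "proj2 s e S1 S2 = (THE f. linmap s s f \<and> (\<forall>x\<in>S1. \<forall>y\<in>S2. f (x * y) = s (e x) y))"

text \<open>Completed tensor product A (x)^ B as bilinear forms on B x A (see above).
  The canonical tensor R = sum a^alpha (x) b_alpha corresponds to (b,a) |-> <a,b>.\<close>
definition canonR :: "('a \<Rightarrow> 'b \<Rightarrow> complex) \<Rightarrow> 'b \<Rightarrow> 'a \<Rightarrow> complex" where
  "canonR P = (\<lambda>b a. P a b)"

definition trA :: "('a \<Rightarrow> 'b \<Rightarrow> complex) \<Rightarrow> ('a \<Rightarrow> 'a) \<Rightarrow> 'b \<Rightarrow> 'b" where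
  "trA P f b = (THE b'. \<forall>x. P x b' = P (f x) b)"

definition trB :: "('a \<Rightarrow> 'b \<Rightarrow> complex) \<Rightarrow> ('b \<Rightarrow> 'b) \<Rightarrow> 'a \<Rightarrow> 'a" where
  "trB P g a = (THE a'. \<forall>y. P a' y = P a (g y))"

definition tmap :: "('a \<Rightarrow> 'b \<Rightarrow> complex) \<Rightarrow> ('a \<Rightarrow> 'a) \<Rightarrow> ('b \<Rightarrow> 'b) \<Rightarrow> ('b \<Rightarrow> 'a \<Rightarrow> complex) \<Rightarrow> 'b \<Rightarrow> 'a \<Rightarrow> complex" where
  "tmap P f g T = (\<lambda>b a. T (trA P f b) (trB P g a))"

end

theory Submission
  imports Defs
begin

text \<open>
  Both projections are determined by their values on products \<open>x y\<close> with \<open>x \<in> A\<^sub>1\<close>,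
  \<open>y \<in> A\<^sub>2\<close>, and by nondegeneracy the pairing is determined by its values on such products
  against products \<open>u v\<close> with \<open>u \<in> B\<^sub>1\<close>, \<open>v \<in> B\<^sub>2\<close>. There the coproduct conditions and
  the orthogonality of \<open>A\<^sub>i\<close> and \<open>B\<^sub>j\<close> (\<open>i \<noteq> j\<close>) collapse the Hopf pairing axioms to
  \<open>\<langle>x, u v\<rangle> = \<epsilon>(v) \<langle>x, u\<rangle>\<close> and \<open>\<langle>x y, u\<rangle> = \<epsilon>(y) \<langle>x, u\<rangle>\<close>, whence
  \<open>\<langle>\<Pi>\<^sub>1(x y), u v\<rangle> = \<epsilon>(y) \<epsilon>(v) \<langle>x, u\<rangle> = \<langle>x y, \<Pi>'\<^sub>1(u v)\<rangle>\<close>, and similarly for \<open>\<Pi>\<^sub>2\<close>.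
  So \<open>\<Pi>\<^sub>i\<close> is the transpose of \<open>\<Pi>'\<^sub>i\<close>, and as \<open>\<Pi>\<^sub>i\<close> is idempotent, all three tensors
  \<open>(\<Pi>\<^sub>i \<otimes> id) R\<close>, \<open>(id \<otimes> \<Pi>'\<^sub>i) R\<close>, \<open>(\<Pi>\<^sub>i \<otimes> \<Pi>'\<^sub>i) R\<close> are the form \<open>(b, a) \<mapsto> \<langle>\<Pi>\<^sub>i a, b\<rangle>\<close>.
\<close>

lemma additive_sum_list:
  assumes "additive f"
  shows "f (\<Sum>x\<leftarrow>xs. g x) = (\<Sum>x\<leftarrow>xs. f (g x))"
  by (induction xs) (simp_all add: additive.add[OF assms] additive.zero[OF assms])

lemma linmap_additive: "linmap s1 s2 f \<Longrightarrow> additive f"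
  unfolding linmap_def additive_def by blast

lemma linmap_scale: "linmap s1 s2 f \<Longrightarrow> f (s1 c x) = s2 c (f x)"
  unfolding linmap_def by blast

lemma lin_functional_additive: "lin_functional s f \<Longrightarrow> additive f"
  unfolding lin_functional_def additive_def by blast

lemma lin_functional_scale: "lin_functional s f \<Longrightarrow> f (s c x) = c * f x"
  unfolding lin_functional_def by blast

lemma bilin_mult:
  "lin_functional s1 f \<Longrightarrow> lin_functional s2 g \<Longrightarrow> bilin s1 s2 (\<lambda>x y. f x * g y)"
  unfolding bilin_def lin_functional_def by (auto simp: algebra_simps)

lemma teq2_sum_mult:
  assumes "teq2 s xs ys" "lin_functional s f" "lin_functional s g"
  shows "(\<Sum>(p, q)\<leftarrow>xs. f p * g q) = (\<Sum>(p, q)\<leftarrow>ys. f p * g q)"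
  using assms bilin_mult[OF assms(2,3)] unfolding teq2_def by blast

lemma additive_eq_on_mult_iso:
  assumes "mult_iso s S1 S2" "additive f" "additive h"
    and "\<And>x y. x \<in> S1 \<Longrightarrow> y \<in> S2 \<Longrightarrow> f (x * y) = h (x * y)"
  shows "f = h"
proof
  fix a
  obtain xs where xs: "set xs \<subseteq> S1 \<times> S2" "a = (\<Sum>(x, y)\<leftarrow>xs. x * y)"
    using assms(1) unfolding mult_iso_def by blast
  have "f a = (\<Sum>(x, y)\<leftarrow>xs. f (x * y))"
    using additive_sum_list[OF assms(2), of "\<lambda>(x, y). x * y" xs] xs(2)
    by (simp add: prod.case_distrib)
  also have "\<dots> = (\<Sum>(x, y)\<leftarrow>xs. h (x * y))"
    using xs(1) assms(4) by (intro arg_cong[where f = sum_list] map_cong) auto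
  also have "\<dots> = h a"
    using additive_sum_list[OF assms(3), of "\<lambda>(x, y). x * y" xs] xs(2)
    by (simp add: prod.case_distrib)
  finally show "f a = h a" .
qed

lemma bialgebra_module: "bialgebra s D e \<Longrightarrow> module s"
  unfolding bialgebra_def module_iff_vector_space by blast

lemma bialgebra_scale_mult: "bialgebra s D e \<Longrightarrow> s c (x * y) = s c x * y"
  unfolding bialgebra_def by blast

lemma bialgebra_counit_lin: "bialgebra s D e \<Longrightarrow> lin_functional s e"
  unfolding bialgebra_def by blast

lemma bialgebra_counit_one: "bialgebra s D e \<Longrightarrow> e 1 = 1"
  unfolding bialgebra_def by blast

lemma bialgebra_sum_counit_right:
  assumes bialg: "bialgebra s D e" and zs: "teq2 s zs (D x)"
    and L: "lin_functional s L" and M: "lin_functional s M"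
    and M_counit: "\<And>p q. (p, q) \<in> set zs \<Longrightarrow> M q = c * e q"
  shows "(\<Sum>(p, q)\<leftarrow>D x. L p * M q) = c * L x"
proof -
  have e: "lin_functional s e" using bialg by (rule bialgebra_counit_lin)
  have "(\<Sum>(p, q)\<leftarrow>D x. L p * M q) = (\<Sum>(p, q)\<leftarrow>zs. L p * M q)"
    using teq2_sum_mult[OF zs L M] by simp
  also have "\<dots> = (\<Sum>(p, q)\<leftarrow>zs. c * (L p * e q))"
    using M_counit by (intro arg_cong[where f = sum_list] map_cong) auto
  also have "\<dots> = c * (\<Sum>(p, q)\<leftarrow>zs. L p * e q)"
    by (simp add: split_def sum_list_const_mult)
  also have "\<dots> = c * (\<Sum>(p, q)\<leftarrow>D x. L p * e q)"
    using teq2_sum_mult[OF zs L e] by simp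
  also have "\<dots> = c * L (\<Sum>(p, q)\<leftarrow>D x. s (e q) p)"
    using additive_sum_list[OF lin_functional_additive[OF L], of "\<lambda>(p, q). s (e q) p" "D x"]
    by (simp add: prod.case_distrib lin_functional_scale[OF L] mult.commute)
  also have "\<dots> = c * L x"
    using bialg unfolding bialgebra_def by simp
  finally show ?thesis .
qed

lemma bialgebra_sum_counit_left:
  assumes bialg: "bialgebra s D e" and zs: "teq2 s zs (D x)"
    and L: "lin_functional s L" and M: "lin_functional s M"
    and M_counit: "\<And>p q. (p, q) \<in> set zs \<Longrightarrow> M p = c * e p"
  shows "(\<Sum>(p, q)\<leftarrow>D x. M p * L q) = c * L x"
proof -
  have e: "lin_functional s e" using bialg by (rule bialgebra_counit_lin)
  have "(\<Sum>(p, q)\<leftarrow>D x. M p * L q) = (\<Sum>(p, q)\<leftarrow>zs. M p * L q)"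
    using teq2_sum_mult[OF zs M L] by simp
  also have "\<dots> = (\<Sum>(p, q)\<leftarrow>zs. c * (e p * L q))"
    using M_counit by (intro arg_cong[where f = sum_list] map_cong) auto
  also have "\<dots> = c * (\<Sum>(p, q)\<leftarrow>zs. e p * L q)"
    by (simp add: split_def sum_list_const_mult)
  also have "\<dots> = c * (\<Sum>(p, q)\<leftarrow>D x. e p * L q)"
    using teq2_sum_mult[OF zs e L] by simp
  also have "\<dots> = c * L (\<Sum>(p, q)\<leftarrow>D x. s (e p) q)"
    using additive_sum_list[OF lin_functional_additive[OF L], of "\<lambda>(p, q). s (e p) q" "D x"]
    by (simp add: prod.case_distrib lin_functional_scale[OF L])
  also have "\<dots> = c * L x"
    using bialg unfolding bialgebra_def by simp
  finally show ?thesis .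
qed

lemma hopf_pairing_lin_left:
  "hopf_pairing sA DA grA sB DB grB P \<Longrightarrow> lin_functional sA (\<lambda>a. P a b)"
  unfolding hopf_pairing_def bilin_def by blast

lemma hopf_pairing_lin_right:
  "hopf_pairing sA DA grA sB DB grB P \<Longrightarrow> lin_functional sB (P a)"
  unfolding hopf_pairing_def bilin_def by blast

lemma hopf_pairing_mult_right:
  "hopf_pairing sA DA grA sB DB grB P \<Longrightarrow> P a (b1 * b2) = (\<Sum>(x, y)\<leftarrow>DA a. P x b1 * P y b2)"
  unfolding hopf_pairing_def by blast

lemma hopf_pairing_mult_left:
  "hopf_pairing sA DA grA sB DB grB P \<Longrightarrow> P (a1 * a2) b = (\<Sum>(u, v)\<leftarrow>DB b. P a2 u * P a1 v)"
  unfolding hopf_pairing_def by blast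

lemma hopf_pairing_ext_left:
  assumes pair: "hopf_pairing sA DA grA sB DB grB P" and "\<And>b. P a b = P a' b"
  shows "a = a'"
proof -
  have "P (a - a') b = 0" for b
    using assms(2) additive.diff[OF lin_functional_additive[OF hopf_pairing_lin_left[OF pair]]]
    by simp
  then have "a - a' = 0" using pair unfolding hopf_pairing_def by blast
  then show ?thesis by simp
qed

lemma hopf_pairing_ext_right:
  assumes pair: "hopf_pairing sA DA grA sB DB grB P" and "\<And>a. P a b = P a b'"
  shows "b = b'"
proof -
  have "P a (b - b') = 0" for a
    using assms(2) additive.diff[OF lin_functional_additive[OF hopf_pairing_lin_right[OF pair]]]
    by simp
  then have "b - b' = 0" using pair unfolding hopf_pairing_def by blast
  then show ?thesis by simp
qed

lemma hopf_pairing_adjoint_on_products: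
  assumes pair: "hopf_pairing sA DA grA sB DB grB P"
    and iso: "mult_iso sA A1 A2" "mult_iso sB B1 B2"
    and lin: "linmap sA sA f" "linmap sB sB g"
    and prod: "\<And>x y u v. x \<in> A1 \<Longrightarrow> y \<in> A2 \<Longrightarrow> u \<in> B1 \<Longrightarrow> v \<in> B2 \<Longrightarrow>
                 P (f (x * y)) (u * v) = P (x * y) (g (u * v))"
  shows "P (f a) b = P a (g b)"
proof -
  have additive_A: "additive (\<lambda>a. P a b)" for b
    using pair by (intro lin_functional_additive hopf_pairing_lin_left)
  have additive_B: "additive (P a)" for a
    using pair by (intro lin_functional_additive hopf_pairing_lin_right)
  have "(\<lambda>b. P (f (x * y)) b) = (\<lambda>b. P (x * y) (g b))" if "x \<in> A1" "y \<in> A2" for x y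
    using iso(2) additive_B lin(2) prod that
    by (intro additive_eq_on_mult_iso) (auto simp: additive_def linmap_def)
  then have "(\<lambda>a. P (f a) b) = (\<lambda>a. P a (g b))"
    using iso(1) additive_A lin(1)
    by (intro additive_eq_on_mult_iso) (auto simp: additive_def linmap_def dest: fun_cong)
  then show ?thesis by (rule fun_cong)
qed

lemma trA_eqI:
  assumes "hopf_pairing sA DA grA sB DB grB P" "\<And>x. P x b' = P (f x) b"
  shows "trA P f b = b'"
  unfolding trA_def using assms
  by (intro the_equality) (auto intro: hopf_pairing_ext_right[OF assms(1)])

lemma trB_eqI:
  assumes "hopf_pairing sA DA grA sB DB grB P" "\<And>y. P a' y = P a (g y)"
  shows "trB P g a = a'"
  unfolding trB_def using assms
  by (intro the_equality) (auto intro: hopf_pairing_ext_left[OF assms(1)])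

lemma tmap_canonR_adjoint_idempotent:
  assumes pair: "hopf_pairing sA DA grA sB DB grB P"
    and adj: "\<And>a b. P (f a) b = P a (g b)" and idem: "\<And>a. f (f a) = f a"
  shows "tmap P f id (canonR P) = tmap P id g (canonR P) \<and>
         tmap P id g (canonR P) = tmap P f g (canonR P)"
proof -
  have "trA P f b = g b" "trA P id b = b" for b
    using adj by (auto intro: trA_eqI[OF pair])
  moreover have "trB P g a = f a" "trB P id a = a" for a
    using adj by (auto intro: trB_eqI[OF pair])
  moreover have "P (f a) (g b) = P (f a) b" for a b
    using adj idem by metis
  ultimately show ?thesis
    unfolding tmap_def canonR_def by (simp add: adj fun_eq_iff)
qed

text \<open>
  Injectivity of the multiplication map only says that a vanishing sum of products is zero as
  a tensor, i.e.\ under every scalar bilinear form. So a map \<open>g\<close> on \<open>S\<^sub>1 \<times> S\<^sub>2\<close> extends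
  along the factorization once \<open>g\<close> is tested against a separating family \<open>F\<close> of linear
  functionals; in the application \<open>F\<close> is the nondegenerate pairing.
\<close>
locale mult_decomposition =
  fixes s :: "complex \<Rightarrow> 'a::ring_1 \<Rightarrow> 'a" and S1 S2 :: "'a set"
    and F :: "'c \<Rightarrow> 'a \<Rightarrow> complex"
  assumes module: "module s"
    and scale_mult: "\<And>c x y. s c (x * y) = s c x * y"
    and subspace: "module.subspace s S1"
    and mult_iso: "mult_iso s S1 S2"
    and lin_functional: "\<And>c. lin_functional s (F c)"
    and separating: "\<And>z. (\<forall>c. F c z = 0) \<Longrightarrow> z = 0"
begin

definition factors :: "'a \<Rightarrow> ('a \<times> 'a) list" where
  "factors a = (SOME xs. set xs \<subseteq> S1 \<times> S2 \<and> a = (\<Sum>(x, y)\<leftarrow>xs. x * y))"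

definition extension :: "('a \<Rightarrow> 'a \<Rightarrow> 'a) \<Rightarrow> 'a \<Rightarrow> 'a" where
  "extension g a = (\<Sum>(x, y)\<leftarrow>factors a. g x y)"

lemma factors: "set (factors a) \<subseteq> S1 \<times> S2" "a = (\<Sum>(x, y)\<leftarrow>factors a. x * y)"
proof -
  have "\<exists>xs. set xs \<subseteq> S1 \<times> S2 \<and> a = (\<Sum>(x, y)\<leftarrow>xs. x * y)"
    using mult_iso unfolding mult_iso_def by blast
  then have "set (factors a) \<subseteq> S1 \<times> S2 \<and> a = (\<Sum>(x, y)\<leftarrow>factors a. x * y)"
    unfolding factors_def by (rule someI_ex)
  then show "set (factors a) \<subseteq> S1 \<times> S2" "a = (\<Sum>(x, y)\<leftarrow>factors a. x * y)" by blast+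
qed

context
  fixes g :: "'a \<Rightarrow> 'a \<Rightarrow> 'a"
  assumes bilin_g: "\<And>c. bilin s s (\<lambda>u v. F c (g u v))"
    and scale_g: "\<And>c u v. g (s c u) v = s c (g u v)"
begin

lemma sum_factors_cong:
  assumes xs: "set xs \<subseteq> S1 \<times> S2" and ys: "set ys \<subseteq> S1 \<times> S2"
    and eq: "(\<Sum>(x, y)\<leftarrow>xs. x * y) = (\<Sum>(x, y)\<leftarrow>ys. x * y)"
  shows "(\<Sum>(x, y)\<leftarrow>xs. g x y) = (\<Sum>(x, y)\<leftarrow>ys. g x y)"
proof -
  define zs where "zs = xs @ map (\<lambda>(x, y). (- x, y)) ys"
  have g_minus: "g (- u) v = - g u v" for u v
    using scale_g[of "-1" u v] module.scale_minus_left[OF module] module.scale_one[OF module]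
    by simp
  have "set zs \<subseteq> S1 \<times> S2"
    using xs ys module.subspace_neg[OF module subspace] unfolding zs_def by auto
  moreover have "(\<Sum>(x, y)\<leftarrow>zs. x * y) = 0"
    using eq by (simp add: zs_def split_def o_def uminus_sum_list_map[unfolded comp_def, symmetric])
  ultimately have "teq2 s zs []"
    using mult_iso unfolding mult_iso_def by blast
  then have "(\<Sum>(x, y)\<leftarrow>zs. F c (g x y)) = 0" for c
    using bilin_g unfolding teq2_def by fastforce
  then have sums_eq: "(\<Sum>(x, y)\<leftarrow>xs. F c (g x y)) = (\<Sum>(x, y)\<leftarrow>ys. F c (g x y))" for c
    using additive.minus[OF lin_functional_additive[OF lin_functional]]
    by (simp add: zs_def split_def o_def g_minus uminus_sum_list_map[unfolded comp_def, symmetric])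
  have "F c ((\<Sum>(x, y)\<leftarrow>xs. g x y) - (\<Sum>(x, y)\<leftarrow>ys. g x y)) = 0" for c
  proof -
    interpret Fc: additive "F c" by (rule lin_functional_additive[OF lin_functional])
    show ?thesis
      using sums_eq[of c] additive_sum_list[OF Fc.additive_axioms, of "\<lambda>(x, y). g x y"]
      by (simp add: Fc.diff prod.case_distrib)
  qed
  then show ?thesis using separating by fastforce
qed

lemma extension_eq:
  assumes "set xs \<subseteq> S1 \<times> S2" "a = (\<Sum>(x, y)\<leftarrow>xs. x * y)"
  shows "extension g a = (\<Sum>(x, y)\<leftarrow>xs. g x y)"
  unfolding extension_def using sum_factors_cong[OF factors(1) assms(1)] factors(2) assms(2)
  by metis

lemma extension_mult: "x \<in> S1 \<Longrightarrow> y \<in> S2 \<Longrightarrow> extension g (x * y) = g x y"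
  using extension_eq[of "[(x, y)]"] by simp

lemma linmap_extension: "linmap s s (extension g)"
  unfolding linmap_def
proof (intro conjI allI)
  fix a b
  show "extension g (a + b) = extension g a + extension g b"
    using extension_eq[of "factors a @ factors b" "a + b"] factors[of a] factors[of b]
    by (simp add: extension_def)
next
  fix c a
  interpret scale_c: additive "s c"
    by standard (rule module.scale_right_distrib[OF module])
  define xs where "xs = map (\<lambda>(x, y). (s c x, y)) (factors a)"
  have "set xs \<subseteq> S1 \<times> S2"
    using factors(1) module.subspace_scale[OF module subspace] unfolding xs_def by auto
  moreover have "s c a = (\<Sum>(x, y)\<leftarrow>xs. x * y)"
    using additive_sum_list[OF scale_c.additive_axioms, of "\<lambda>(x, y). x * y" "factors a"]
      factors(2)[of a]
    by (simp add: xs_def prod.case_distrib scale_mult o_def split_def)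
  ultimately have "extension g (s c a) = (\<Sum>(x, y)\<leftarrow>xs. g x y)"
    by (rule extension_eq)
  also have "\<dots> = s c (extension g a)"
    using additive_sum_list[OF scale_c.additive_axioms, of "\<lambda>(x, y). g x y" "factors a"]
    by (simp add: xs_def extension_def prod.case_distrib scale_g o_def split_def)
  finally show "extension g (s c a) = s c (extension g a)" .
qed

lemma the_extension:
  "(THE f. linmap s s f \<and> (\<forall>x\<in>S1. \<forall>y\<in>S2. f (x * y) = g x y)) = extension g"
proof (rule the_equality)
  show "linmap s s (extension g) \<and> (\<forall>x\<in>S1. \<forall>y\<in>S2. extension g (x * y) = g x y)"
    using linmap_extension extension_mult by blast
next
  fix f assume "linmap s s f \<and> (\<forall>x\<in>S1. \<forall>y\<in>S2. f (x * y) = g x y)"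
  then show "f = extension g"
    using mult_iso linmap_additive linmap_extension extension_mult
    by (intro additive_eq_on_mult_iso) auto
qed

end

context
  fixes e :: "'a \<Rightarrow> complex"
  assumes lin_e: "lin_functional s e"
begin

lemma linmap_proj1: "linmap s s (proj1 s e S1 S2)"
  and proj1_mult: "x \<in> S1 \<Longrightarrow> y \<in> S2 \<Longrightarrow> proj1 s e S1 S2 (x * y) = s (e y) x"
proof -
  have bilin_g: "bilin s s (\<lambda>u v. F c (s (e v) u))" for c
    using bilin_mult[OF lin_functional lin_e]
    by (simp add: lin_functional_scale[OF lin_functional] mult.commute)
  have scale_g: "s (e v) (s c u) = s c (s (e v) u)" for c u v
    by (rule module.scale_left_commute[OF module])
  have "proj1 s e S1 S2 = extension (\<lambda>x y. s (e y) x)"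
    unfolding proj1_def using bilin_g scale_g by (rule the_extension)
  then show "linmap s s (proj1 s e S1 S2)"
    and "x \<in> S1 \<Longrightarrow> y \<in> S2 \<Longrightarrow> proj1 s e S1 S2 (x * y) = s (e y) x"
    using linmap_extension[OF bilin_g scale_g] extension_mult[OF bilin_g scale_g] by simp_all
qed

lemma linmap_proj2: "linmap s s (proj2 s e S1 S2)"
  and proj2_mult: "x \<in> S1 \<Longrightarrow> y \<in> S2 \<Longrightarrow> proj2 s e S1 S2 (x * y) = s (e x) y"
proof -
  have bilin_g: "bilin s s (\<lambda>u v. F c (s (e u) v))" for c
    using bilin_mult[OF lin_e lin_functional]
    by (simp add: lin_functional_scale[OF lin_functional])
  have scale_g: "s (e (s c u)) v = s c (s (e u) v)" for c u v
    using module.scale_scale[OF module] by (simp add: lin_functional_scale[OF lin_e])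
  have "proj2 s e S1 S2 = extension (\<lambda>x y. s (e x) y)"
    unfolding proj2_def using bilin_g scale_g by (rule the_extension)
  then show "linmap s s (proj2 s e S1 S2)"
    and "x \<in> S1 \<Longrightarrow> y \<in> S2 \<Longrightarrow> proj2 s e S1 S2 (x * y) = s (e x) y"
    using linmap_extension[OF bilin_g scale_g] extension_mult[OF bilin_g scale_g] by simp_all
qed

lemma proj1_idem:
  assumes "e 1 = 1" "1 \<in> S2"
  shows "proj1 s e S1 S2 (proj1 s e S1 S2 a) = proj1 s e S1 S2 a"
proof -
  have "proj1 s e S1 S2 x = x" if "x \<in> S1" for x
    using proj1_mult[OF that assms(2)] assms(1) module.scale_one[OF module] by simp
  then have "proj1 s e S1 S2 \<circ> proj1 s e S1 S2 = proj1 s e S1 S2"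
    using mult_iso linmap_additive[OF linmap_proj1]
    by (intro additive_eq_on_mult_iso)
      (auto simp: proj1_mult linmap_scale[OF linmap_proj1] additive_def)
  then show ?thesis by (rule comp_eq_dest_lhs)
qed

lemma proj2_idem:
  assumes "e 1 = 1" "1 \<in> S1"
  shows "proj2 s e S1 S2 (proj2 s e S1 S2 a) = proj2 s e S1 S2 a"
proof -
  have "proj2 s e S1 S2 y = y" if "y \<in> S2" for y
    using proj2_mult[OF assms(2) that] assms(1) module.scale_one[OF module] by simp
  then have "proj2 s e S1 S2 \<circ> proj2 s e S1 S2 = proj2 s e S1 S2"
    using mult_iso linmap_additive[OF linmap_proj2]
    by (intro additive_eq_on_mult_iso)
      (auto simp: proj2_mult linmap_scale[OF linmap_proj2] additive_def)
  then show ?thesis by (rule comp_eq_dest_lhs)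
qed

end

end

lemma mult_decomposition_left:
  assumes "bialgebra sA DA eA" "hopf_pairing sA DA grA sB DB grB P"
    and "subalgebra sA A1" "mult_iso sA A1 A2"
  shows "mult_decomposition sA A1 A2 (\<lambda>b a. P a b)"
proof (rule mult_decomposition.intro)
  show "module sA"
    using assms(1) by (rule bialgebra_module)
  show "sA c (x * y) = sA c x * y" for c x y
    using assms(1) by (rule bialgebra_scale_mult)
  show "lin_functional sA (\<lambda>a. P a b)" for b
    using assms(2) by (rule hopf_pairing_lin_left)
  show "z = 0" if "\<forall>b. P z b = 0" for z
    using assms(2) that unfolding hopf_pairing_def by blast
qed (use assms(3,4) in \<open>auto simp: subalgebra_def\<close>)

lemma mult_decomposition_right:
  assumes "bialgebra sB DB eB" "hopf_pairing sA DA grA sB DB grB P"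
    and "subalgebra sB B1" "mult_iso sB B1 B2"
  shows "mult_decomposition sB B1 B2 P"
proof (rule mult_decomposition.intro)
  show "module sB"
    using assms(1) by (rule bialgebra_module)
  show "sB c (x * y) = sB c x * y" for c x y
    using assms(1) by (rule bialgebra_scale_mult)
  show "lin_functional sB (P a)" for a
    using assms(2) by (rule hopf_pairing_lin_right)
  show "z = 0" if "\<forall>a. P a z = 0" for z
    using assms(2) that unfolding hopf_pairing_def by blast
qed (use assms(3,4) in \<open>auto simp: subalgebra_def\<close>)

locale orthogonal_factorizations =
  fixes sA :: "complex \<Rightarrow> 'a::ring_1 \<Rightarrow> 'a" and DA :: "'a \<Rightarrow> ('a \<times> 'a) list"
    and eA :: "'a \<Rightarrow> complex" and grA :: "nat \<Rightarrow> 'a set"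
    and sB :: "complex \<Rightarrow> 'b::ring_1 \<Rightarrow> 'b" and DB :: "'b \<Rightarrow> ('b \<times> 'b) list"
    and eB :: "'b \<Rightarrow> complex" and grB :: "nat \<Rightarrow> 'b set"
    and P :: "'a \<Rightarrow> 'b \<Rightarrow> complex"
    and A1 A2 :: "'a set" and B1 B2 :: "'b set"
  assumes bialgebra_A: "bialgebra sA DA eA"
    and bialgebra_B: "bialgebra sB DB eB"
    and pairing: "hopf_pairing sA DA grA sB DB grB P"
    and subalgebra_A: "subalgebra sA A1" "subalgebra sA A2"
    and mult_iso_A: "mult_iso sA A1 A2"
    and coproduct_A1: "\<forall>a\<in>A1. \<exists>xs. teq2 sA xs (DA a) \<and> set xs \<subseteq> UNIV \<times> A1"
    and coproduct_A2: "\<forall>a\<in>A2. \<exists>xs. teq2 sA xs (DA a) \<and> set xs \<subseteq> A2 \<times> UNIV"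
    and subalgebra_B: "subalgebra sB B1" "subalgebra sB B2"
    and mult_iso_B: "mult_iso sB B1 B2"
    and coproduct_B1: "\<forall>b\<in>B1. \<exists>xs. teq2 sB xs (DB b) \<and> set xs \<subseteq> B1 \<times> UNIV"
    and coproduct_B2: "\<forall>b\<in>B2. \<exists>xs. teq2 sB xs (DB b) \<and> set xs \<subseteq> UNIV \<times> B2"
    and orthogonal_A1_B2: "\<forall>a\<in>A1. \<forall>b\<in>B2. P a b = eA a * eB b"
    and orthogonal_A2_B1: "\<forall>a\<in>A2. \<forall>b\<in>B1. P a b = eA a * eB b"
begin

sublocale A: mult_decomposition sA A1 A2 "\<lambda>b a. P a b"
  using bialgebra_A pairing subalgebra_A(1) mult_iso_A by (rule mult_decomposition_left)

sublocale B: mult_decomposition sB B1 B2 P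
  using bialgebra_B pairing subalgebra_B(1) mult_iso_B by (rule mult_decomposition_right)

lemma pairing_mult_right_B2:
  assumes "x \<in> A1" "v \<in> B2"
  shows "P x (u * v) = eB v * P x u"
proof -
  obtain zs where zs: "teq2 sA zs (DA x)" "set zs \<subseteq> UNIV \<times> A1"
    using coproduct_A1 assms(1) by blast
  have "(\<Sum>(p, q)\<leftarrow>DA x. P p u * P q v) = eB v * P x u"
    using zs(2) assms(2) orthogonal_A1_B2
    by (intro bialgebra_sum_counit_right[OF bialgebra_A zs(1)] hopf_pairing_lin_left[OF pairing])
      (auto simp: mult.commute)
  then show ?thesis by (simp add: hopf_pairing_mult_right[OF pairing])
qed

lemma pairing_mult_right_B1:
  assumes "x \<in> A2" "u \<in> B1"
  shows "P x (u * v) = eB u * P x v"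
proof -
  obtain zs where zs: "teq2 sA zs (DA x)" "set zs \<subseteq> A2 \<times> UNIV"
    using coproduct_A2 assms(1) by blast
  have "(\<Sum>(p, q)\<leftarrow>DA x. P p u * P q v) = eB u * P x v"
    using zs(2) assms(2) orthogonal_A2_B1
    by (intro bialgebra_sum_counit_left[OF bialgebra_A zs(1)] hopf_pairing_lin_left[OF pairing])
      (auto simp: mult.commute)
  then show ?thesis by (simp add: hopf_pairing_mult_right[OF pairing])
qed

lemma pairing_mult_left_A2:
  assumes "y \<in> A2" "u \<in> B1"
  shows "P (x * y) u = eA y * P x u"
proof -
  obtain ws where ws: "teq2 sB ws (DB u)" "set ws \<subseteq> B1 \<times> UNIV"
    using coproduct_B1 assms(2) by blast
  have "(\<Sum>(p, q)\<leftarrow>DB u. P y p * P x q) = eA y * P x u"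
    using ws(2) assms(1) orthogonal_A2_B1
    by (intro bialgebra_sum_counit_left[OF bialgebra_B ws(1)] hopf_pairing_lin_right[OF pairing])
      auto
  then show ?thesis by (simp add: hopf_pairing_mult_left[OF pairing])
qed

lemma pairing_mult_left_A1:
  assumes "x \<in> A1" "v \<in> B2"
  shows "P (x * y) v = eA x * P y v"
proof -
  obtain ws where ws: "teq2 sB ws (DB v)" "set ws \<subseteq> UNIV \<times> B2"
    using coproduct_B2 assms(2) by blast
  have "(\<Sum>(p, q)\<leftarrow>DB v. P y p * P x q) = eA x * P y v"
    using ws(2) assms(1) orthogonal_A1_B2
    by (intro bialgebra_sum_counit_right[OF bialgebra_B ws(1)] hopf_pairing_lin_right[OF pairing])
      auto
  then show ?thesis by (simp add: hopf_pairing_mult_left[OF pairing])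
qed

lemma lin_counit_A: "lin_functional sA eA"
  and lin_counit_B: "lin_functional sB eB"
  using bialgebra_counit_lin[OF bialgebra_A] bialgebra_counit_lin[OF bialgebra_B] .

lemma proj1_adjoint: "P (proj1 sA eA A1 A2 a) b = P a (proj1 sB eB B1 B2 b)"
proof (rule hopf_pairing_adjoint_on_products[OF pairing mult_iso_A mult_iso_B])
  show "linmap sA sA (proj1 sA eA A1 A2)" "linmap sB sB (proj1 sB eB B1 B2)"
    using A.linmap_proj1[OF lin_counit_A] B.linmap_proj1[OF lin_counit_B] .
  fix x y u v assume "x \<in> A1" "y \<in> A2" "u \<in> B1" "v \<in> B2"
  then show "P (proj1 sA eA A1 A2 (x * y)) (u * v) = P (x * y) (proj1 sB eB B1 B2 (u * v))"
    by (simp add: A.proj1_mult[OF lin_counit_A] B.proj1_mult[OF lin_counit_B]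
        lin_functional_scale[OF hopf_pairing_lin_left[OF pairing]]
        lin_functional_scale[OF hopf_pairing_lin_right[OF pairing]]
        pairing_mult_right_B2 pairing_mult_left_A2)
qed

lemma proj2_adjoint: "P (proj2 sA eA A1 A2 a) b = P a (proj2 sB eB B1 B2 b)"
proof (rule hopf_pairing_adjoint_on_products[OF pairing mult_iso_A mult_iso_B])
  show "linmap sA sA (proj2 sA eA A1 A2)" "linmap sB sB (proj2 sB eB B1 B2)"
    using A.linmap_proj2[OF lin_counit_A] B.linmap_proj2[OF lin_counit_B] .
  fix x y u v assume "x \<in> A1" "y \<in> A2" "u \<in> B1" "v \<in> B2"
  then show "P (proj2 sA eA A1 A2 (x * y)) (u * v) = P (x * y) (proj2 sB eB B1 B2 (u * v))"
    by (simp add: A.proj2_mult[OF lin_counit_A] B.proj2_mult[OF lin_counit_B]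
        lin_functional_scale[OF hopf_pairing_lin_left[OF pairing]]
        lin_functional_scale[OF hopf_pairing_lin_right[OF pairing]]
        pairing_mult_right_B1 pairing_mult_left_A1)
qed

lemma proj1_A_idem: "proj1 sA eA A1 A2 (proj1 sA eA A1 A2 a) = proj1 sA eA A1 A2 a"
  using subalgebra_A(2) bialgebra_counit_one[OF bialgebra_A]
  by (intro A.proj1_idem[OF lin_counit_A]) (auto simp: subalgebra_def)

lemma proj2_A_idem: "proj2 sA eA A1 A2 (proj2 sA eA A1 A2 a) = proj2 sA eA A1 A2 a"
  using subalgebra_A(1) bialgebra_counit_one[OF bialgebra_A]
  by (intro A.proj2_idem[OF lin_counit_A]) (auto simp: subalgebra_def)

end

theorem mainTheorem11:
  fixes sA :: "complex \<Rightarrow> 'a::ring_1 \<Rightarrow> 'a" and DA :: "'a \<Rightarrow> ('a \<times> 'a) list"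
    and eA :: "'a \<Rightarrow> complex" and grA :: "nat \<Rightarrow> 'a set"
    and sB :: "complex \<Rightarrow> 'b::ring_1 \<Rightarrow> 'b" and DB :: "'b \<Rightarrow> ('b \<times> 'b) list"
    and eB :: "'b \<Rightarrow> complex" and grB :: "nat \<Rightarrow> 'b set"
    and P :: "'a \<Rightarrow> 'b \<Rightarrow> complex"
    and A1 A2 :: "'a set" and B1 B2 :: "'b set"
  assumes bA: "graded_bialgebra sA DA eA grA"
    and bB: "graded_bialgebra sB DB eB grB"
    and pair: "hopf_pairing sA DA grA sB DB grB P"
    and A_sub: "subalgebra sA A1" "subalgebra sA A2"
    and A_gr: "graded_subspace grA A1" "graded_subspace grA A2"
    and A_iso: "mult_iso sA A1 A2"
    and A1_cop: "\<forall>a\<in>A1. \<exists>xs. teq2 sA xs (DA a) \<and> set xs \<subseteq> UNIV \<times> A1"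
    and A2_cop: "\<forall>a\<in>A2. \<exists>xs. teq2 sA xs (DA a) \<and> set xs \<subseteq> A2 \<times> UNIV"
    and B_sub: "subalgebra sB B1" "subalgebra sB B2"
    and B_gr: "graded_subspace grB B1" "graded_subspace grB B2"
    and B_iso: "mult_iso sB B1 B2"
    and B1_cop: "\<forall>b\<in>B1. \<exists>xs. teq2 sB xs (DB b) \<and> set xs \<subseteq> B1 \<times> UNIV"
    and B2_cop: "\<forall>b\<in>B2. \<exists>xs. teq2 sB xs (DB b) \<and> set xs \<subseteq> UNIV \<times> B2"
    and orth12: "\<forall>a\<in>A1. \<forall>b\<in>B2. P a b = eA a * eB b"
    and orth21: "\<forall>a\<in>A2. \<forall>b\<in>B1. P a b = eA a * eB b"
  shows "tmap P (proj1 sA eA A1 A2) id (canonR P) = tmap P id (proj1 sB eB B1 B2) (canonR P) \<and>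
         tmap P id (proj1 sB eB B1 B2) (canonR P)
           = tmap P (proj1 sA eA A1 A2) (proj1 sB eB B1 B2) (canonR P) \<and>
         tmap P (proj2 sA eA A1 A2) id (canonR P) = tmap P id (proj2 sB eB B1 B2) (canonR P) \<and>
         tmap P id (proj2 sB eB B1 B2) (canonR P)
           = tmap P (proj2 sA eA A1 A2) (proj2 sB eB B1 B2) (canonR P)"
proof -
  \<comment> \<open>The gradings (and \<open>A_gr\<close>, \<open>B_gr\<close>) only make the completed tensor product meaningful;
     the argument itself does not use them.\<close>
  have "bialgebra sA DA eA" "bialgebra sB DB eB"
    using bA bB unfolding graded_bialgebra_def by blast+
  then interpret orthogonal_factorizations sA DA eA grA sB DB eB grB P A1 A2 B1 B2
    using pair A_sub A_iso A1_cop A2_cop B_sub B_iso B1_cop B2_cop orth12 orth21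
    by (intro orthogonal_factorizations.intro)
  show ?thesis
    using tmap_canonR_adjoint_idempotent[OF pair, where f = "proj1 sA eA A1 A2"
        and g = "proj1 sB eB B1 B2", OF proj1_adjoint proj1_A_idem]
      tmap_canonR_adjoint_idempotent[OF pair, where f = "proj2 sA eA A1 A2"
        and g = "proj2 sB eB B1 B2", OF proj2_adjoint proj2_A_idem]
    by blast
qed

end
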